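(* Let $X$ be a real Hilbert space, $f:X\to\mathbb{R}$ a proper $\Phi_{lsc}$-convex function and $U\subset X$ open. If $f$ is twice continuously Fréchet differentiable on $U$, then $\partial_{lsc}f(x)\ne\emptyset$ for every $x\in U$.
   Context: $\Phi_{lsc}$ is the class of functions $\varphi(x)=-a\|x\|^2+\langle v,x\rangle+c$ ($a\ge0$, $v\in X^*$, $c\in\mathbb{R}$); $f$ is $\Phi_{lsc}$-convex if it is the pointwise supremum of the $\varphi\in\Phi_{lsc}$ with $\varphi\le f$; proper means at least one such $\varphi$ exists. $\partial_{lsc}f(x)$ is the set of $(a,v)\in\mathbb{R}_+\times X^*$ with $f(z)-f(x)\ge\langle v,z-x\rangle-a\|z\|^2+a\|x\|^2$ for all $z\in X$. *)

theory Defs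
  imports "HOL-Analysis.Analysis"
begin

definition Phi_lsc :: "('a::real_normed_vector \<Rightarrow> real) set" where
  "Phi_lsc = {\<phi>. \<exists>a (v::'a \<Rightarrow>\<^sub>L real) c. a \<ge> 0 \<and>
      \<phi> = (\<lambda>x. - a * (norm x)\<^sup>2 + blinfun_apply v x + c)}"

definition Phi_lsc_minorants :: "('a::real_normed_vector \<Rightarrow> real) \<Rightarrow> ('a \<Rightarrow> real) set" where
  "Phi_lsc_minorants f = {\<phi> \<in> Phi_lsc. \<forall>x. \<phi> x \<le> f x}"

definition Phi_lsc_convex :: "('a::real_normed_vector \<Rightarrow> real) \<Rightarrow> bool" where
  "Phi_lsc_convex f \<longleftrightarrow> (\<forall>x. f x = (SUP \<phi>\<in>Phi_lsc_minorants f. \<phi> x))"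

definition Phi_lsc_proper :: "('a::real_normed_vector \<Rightarrow> real) \<Rightarrow> bool" where
  "Phi_lsc_proper f \<longleftrightarrow> Phi_lsc_minorants f \<noteq> {}"

definition subdiff_lsc :: "('a::real_normed_vector \<Rightarrow> real) \<Rightarrow> 'a \<Rightarrow> (real \<times> ('a \<Rightarrow>\<^sub>L real)) set" where
  "subdiff_lsc f x = {(a, v). a \<ge> 0 \<and>
      (\<forall>z. f z - f x \<ge> blinfun_apply v (z - x) - a * (norm z)\<^sup>2 + a * (norm x)\<^sup>2)}"

definition C2_on :: "'a::real_normed_vector set \<Rightarrow> ('a \<Rightarrow> real) \<Rightarrow> bool" where
  "C2_on U f \<longleftrightarrow> (\<exists>(Df :: 'a \<Rightarrow> ('a \<Rightarrow>\<^sub>L real)) (D2f :: 'a \<Rightarrow> ('a \<Rightarrow>\<^sub>L ('a \<Rightarrow>\<^sub>L real))).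
      (\<forall>x\<in>U. (f has_derivative blinfun_apply (Df x)) (at x)) \<and>
      (\<forall>x\<in>U. (Df has_derivative blinfun_apply (D2f x)) (at x)) \<and>
      continuous_on U D2f)"

end

theory Submission
  imports Defs
begin

text \<open>A proper function lies above some \<open>-a\<^sub>0\<parallel>z\<parallel>\<^sup>2 + \<langle>v\<^sub>0,z\<rangle> + c\<^sub>0\<close>.
  Relative to the tangent line at \<open>x\<close> this minorant, being quadratic from below, forces
  \<open>f z - f x - f'(x)(z - x) \<ge> -A\<parallel>z - x\<parallel>\<^sup>2\<close> once \<open>\<parallel>z - x\<parallel>\<close> is bounded away from \<open>0\<close>;
  near \<open>x\<close> the same estimate follows from the mean value inequality, since \<open>f'\<close> is
  differentiable and hence Lipschitz at \<open>x\<close>. With such a global constant \<open>a\<close>, the identity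
  \<open>\<parallel>z\<parallel>\<^sup>2 - \<parallel>x\<parallel>\<^sup>2 = 2\<langle>x,z - x\<rangle> + \<parallel>z - x\<parallel>\<^sup>2\<close> shows that \<open>(a, f'(x) + 2a\<langle>x,\<cdot>\<rangle>)\<close> is a
  \<open>\<Phi>\<^sub>l\<^sub>s\<^sub>c\<close>-subgradient at \<open>x\<close>.\<close>

lemma has_derivative_at_imp_lipschitz_at:
  fixes Df :: "'a::real_normed_vector \<Rightarrow> 'b::real_normed_vector"
  assumes "(Df has_derivative D) (at x)"
  shows "\<exists>d>0. \<exists>K\<ge>0. \<forall>y. norm (y - x) < d \<longrightarrow> norm (Df y - Df x) \<le> K * norm (y - x)"
proof -
  have "bounded_linear D" using assms by (rule has_derivative_bounded_linear)
  then obtain M where M: "M > 0" "\<And>h. norm (D h) \<le> norm h * M"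
    using bounded_linear.pos_bounded by blast
  obtain d where d: "d > 0" "\<And>y. norm (y - x) < d \<Longrightarrow> norm (Df y - Df x - D (y - x)) \<le> 1 * norm (y - x)"
    using assms unfolding has_derivative_at_alt by (meson zero_less_one)
  have "norm (Df y - Df x) \<le> (M + 1) * norm (y - x)" if "norm (y - x) < d" for y
  proof -
    have "norm (Df y - Df x) \<le> norm (Df y - Df x - D (y - x)) + norm (D (y - x))"
      using norm_triangle_ineq[of "Df y - Df x - D (y - x)" "D (y - x)"] by simp
    also have "\<dots> \<le> norm (y - x) + norm (y - x) * M"
      using d(2)[OF that] M(2) by (intro add_mono) auto
    finally show ?thesis by (simp add: algebra_simps)
  qed
  with d(1) M(1) show ?thesis by (intro exI[of _ d] conjI exI[of _ "M + 1"]) auto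
qed

lemma lipschitz_derivative_imp_quadratic_remainder:
  fixes f :: "'a::real_normed_vector \<Rightarrow> 'b::real_normed_vector" and Df :: "'a \<Rightarrow> 'a \<Rightarrow>\<^sub>L 'b"
  assumes deriv: "\<And>z. norm (z - x) \<le> norm (y - x) \<Longrightarrow> (f has_derivative blinfun_apply (Df z)) (at z)"
    and lip: "\<And>z. norm (z - x) \<le> norm (y - x) \<Longrightarrow> norm (Df z - Df x) \<le> K * norm (z - x)"
    and "K \<ge> 0"
  shows "norm (f y - f x - Df x (y - x)) \<le> K * (norm (y - x))\<^sup>2"
proof -
  define S where "S = cball x (norm (y - x))"
  have "norm (f y - f x - Df x (y - x)) \<le> norm (y - x) * (K * norm (y - x))"
  proof (rule differentiable_bound_linearization[where S = S and f' = "\<lambda>z. blinfun_apply (Df z)"])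
    fix t :: real assume "t \<in> {0..1}"
    then have "norm (t *\<^sub>R (y - x)) \<le> norm (y - x)" by (simp add: mult_left_le_one_le)
    then show "x + t *\<^sub>R (y - x) \<in> S" by (simp add: S_def dist_norm)
  next
    fix z assume "z \<in> S"
    then have z: "norm (z - x) \<le> norm (y - x)" by (simp add: S_def dist_norm norm_minus_commute)
    show "(f has_derivative blinfun_apply (Df z)) (at z within S)"
      using deriv[OF z] by (rule has_derivative_at_withinI)
    have "blinfun_apply (Df z) - blinfun_apply (Df x) = blinfun_apply (Df z - Df x)"
      by (rule ext) (simp add: blinfun.diff_left)
    then have "onorm (blinfun_apply (Df z) - blinfun_apply (Df x)) = norm (Df z - Df x)"
      by (simp add: norm_blinfun.rep_eq)
    also have "\<dots> \<le> K * norm (y - x)"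
      using lip[OF z] mult_left_mono[OF z \<open>K \<ge> 0\<close>] by linarith
    finally show "onorm (blinfun_apply (Df z) - blinfun_apply (Df x)) \<le> K * norm (y - x)" .
  qed (simp add: S_def)
  then show ?thesis by (simp add: power2_eq_square mult_ac)
qed

lemma C1_with_differentiable_derivative_imp_local_quadratic_bound:
  fixes f :: "'a::real_normed_vector \<Rightarrow> real" and Df :: "'a \<Rightarrow> 'a \<Rightarrow>\<^sub>L real"
  assumes "open U" "x \<in> U"
    and deriv: "\<And>z. z \<in> U \<Longrightarrow> (f has_derivative blinfun_apply (Df z)) (at z)"
    and "(Df has_derivative D2) (at x)"
  shows "\<exists>r>0. \<exists>K\<ge>0. \<forall>y. norm (y - x) < r \<longrightarrow> f y - f x - Df x (y - x) \<ge> - K * (norm (y - x))\<^sup>2"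
proof -
  obtain d K where d: "d > 0" "K \<ge> 0"
    and lip: "\<And>y. norm (y - x) < d \<Longrightarrow> norm (Df y - Df x) \<le> K * norm (y - x)"
    using has_derivative_at_imp_lipschitz_at[OF assms(4)] by blast
  obtain e where e: "e > 0" "ball x e \<subseteq> U" using assms(1,2) open_contains_ball by blast
  have "f y - f x - Df x (y - x) \<ge> - K * (norm (y - x))\<^sup>2" if y: "norm (y - x) < min d e" for y
  proof -
    have "norm (f y - f x - Df x (y - x)) \<le> K * (norm (y - x))\<^sup>2"
    proof (rule lipschitz_derivative_imp_quadratic_remainder[OF _ _ \<open>K \<ge> 0\<close>])
      fix z assume "norm (z - x) \<le> norm (y - x)"
      with y have "norm (z - x) < d" "z \<in> ball x e" by (auto simp: dist_norm norm_minus_commute)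
      then show "(f has_derivative blinfun_apply (Df z)) (at z)" "norm (Df z - Df x) \<le> K * norm (z - x)"
        using deriv e(2) lip by auto
    qed
    then show ?thesis by (simp add: abs_le_iff)
  qed
  with d e show ?thesis by (intro exI[of _ "min d e"] conjI exI[of _ K]) auto
qed

lemma affine_le_quadratic_beyond:
  fixes r n B C :: real
  assumes "r > 0" "n \<ge> r" "B \<ge> 0" "C \<ge> 0"
  shows "B * n + C \<le> (B / r + C / r\<^sup>2) * n\<^sup>2"
proof -
  have "B * n = (B / r) * (r * n)" using assms by (simp add: field_simps)
  also have "\<dots> \<le> (B / r) * (n * n)"
    using assms by (intro mult_left_mono mult_right_mono) auto
  finally have "B * n \<le> (B / r) * n\<^sup>2" by (simp add: power2_eq_square)
  moreover have "C = (C / r\<^sup>2) * r\<^sup>2" using assms by (simp add: field_simps)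
  then have "C \<le> (C / r\<^sup>2) * n\<^sup>2"
    using assms by (metis divide_nonneg_pos mult_left_mono power_mono zero_less_power less_imp_le)
  ultimately show ?thesis by (simp add: distrib_right)
qed

lemma quadratic_minorant_imp_quadratic_bound_beyond:
  fixes f :: "'a::real_normed_vector \<Rightarrow> real" and v0 L :: "'a \<Rightarrow>\<^sub>L real"
  assumes minorant: "\<And>z. - a0 * (norm z)\<^sup>2 + v0 z + c0 \<le> f z"
    and "a0 \<ge> 0" "r > 0"
  shows "\<exists>A\<ge>0. \<forall>z. norm (z - x) \<ge> r \<longrightarrow> f z - f x - L (z - x) \<ge> - A * (norm (z - x))\<^sup>2"
proof -
  define B where "B = norm v0 + norm L"
  define C where "C = 2 * a0 * (norm x)\<^sup>2 + norm v0 * norm x + \<bar>f x\<bar> + \<bar>c0\<bar>"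
  define A where "A = 2 * a0 + (B / r + C / r\<^sup>2)"
  have "B \<ge> 0" "C \<ge> 0" using \<open>a0 \<ge> 0\<close> by (auto simp: B_def C_def)
  have "f z - f x - L (z - x) \<ge> - A * (norm (z - x))\<^sup>2" if "norm (z - x) \<ge> r" for z
  proof -
    define n where "n = norm (z - x)"
    have "norm z \<le> n + norm x" unfolding n_def by (metis diff_add_cancel norm_triangle_ineq)
    then have "(norm z)\<^sup>2 \<le> (n + norm x)\<^sup>2" by (intro power_mono) auto
    also have "\<dots> \<le> 2 * n\<^sup>2 + 2 * (norm x)\<^sup>2"
      using sum_squares_ge_zero[of "n - norm x" 0] by (simp add: power2_eq_square algebra_simps)
    finally have "a0 * (norm z)\<^sup>2 \<le> a0 * (2 * n\<^sup>2 + 2 * (norm x)\<^sup>2)"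
      using \<open>a0 \<ge> 0\<close> by (intro mult_left_mono)
    moreover have "v0 z \<ge> - (norm v0 * n + norm v0 * norm x)"
      using norm_blinfun[of v0 z] \<open>norm z \<le> n + norm x\<close>
        mult_left_mono[OF \<open>norm z \<le> n + norm x\<close> norm_ge_zero[of v0]]
      by (simp add: algebra_simps abs_le_iff)
    moreover have "L (z - x) \<le> norm L * n"
      using norm_blinfun[of L "z - x"] by (simp add: n_def abs_le_iff)
    moreover have "B * n + C \<le> (B / r + C / r\<^sup>2) * n\<^sup>2"
      using affine_le_quadratic_beyond \<open>r > 0\<close> that \<open>B \<ge> 0\<close> \<open>C \<ge> 0\<close> by (simp add: n_def)
    moreover have "\<bar>f x\<bar> \<ge> f x" "\<bar>c0\<bar> \<ge> - c0" by auto
    ultimately show ?thesis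
      using minorant[of z] unfolding A_def B_def C_def n_def[symmetric] by (simp add: algebra_simps)
  qed
  moreover have "A \<ge> 0" using \<open>a0 \<ge> 0\<close> \<open>r > 0\<close> \<open>B \<ge> 0\<close> \<open>C \<ge> 0\<close> by (simp add: A_def)
  ultimately show ?thesis by blast
qed

lemma quadratic_lower_bound_imp_subdiff_lsc:
  fixes f :: "'a::real_inner \<Rightarrow> real" and L :: "'a \<Rightarrow>\<^sub>L real"
  assumes "a \<ge> 0" and bound: "\<And>z. f z - f x - L (z - x) \<ge> - a * (norm (z - x))\<^sup>2"
  shows "(a, L + (2 * a) *\<^sub>R blinfun_inner_right x) \<in> subdiff_lsc f x"
proof -
  have shift: "(L + (2 * a) *\<^sub>R blinfun_inner_right x) (z - x) - a * (norm z)\<^sup>2 + a * (norm x)\<^sup>2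
      = L (z - x) - a * (norm (z - x))\<^sup>2" for z
  proof -
    have "(norm z)\<^sup>2 = (norm x)\<^sup>2 + 2 * (x \<bullet> (z - x)) + (norm (z - x))\<^sup>2"
      by (simp add: power2_norm_eq_inner inner_diff_left inner_diff_right inner_commute algebra_simps)
    then show ?thesis by (simp add: blinfun.add_left blinfun.scaleR_left distrib_left)
  qed
  have "(L + (2 * a) *\<^sub>R blinfun_inner_right x) (z - x) - a * (norm z)\<^sup>2 + a * (norm x)\<^sup>2
      \<le> f z - f x" for z
    using shift[of z] bound[of z] by linarith
  with \<open>a \<ge> 0\<close> show ?thesis unfolding subdiff_lsc_def by simp
qed

theorem mainTheorem7:
  fixes f :: "'a::{real_inner, complete_space} \<Rightarrow> real" and U :: "'a set"
  assumes "Phi_lsc_proper f" and "Phi_lsc_convex f"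
    and "open U" and "C2_on U f"
  shows "\<forall>x\<in>U. subdiff_lsc f x \<noteq> {}"
proof
  fix x assume "x \<in> U"
  obtain Df :: "'a \<Rightarrow> ('a \<Rightarrow>\<^sub>L real)" and D2f where
    deriv: "\<forall>z\<in>U. (f has_derivative blinfun_apply (Df z)) (at z)" and
    deriv2: "\<forall>z\<in>U. (Df has_derivative blinfun_apply (D2f z)) (at z)"
    using assms(4) unfolding C2_on_def by blast
  obtain r K where "r > 0" "K \<ge> 0" and near:
      "\<forall>z. norm (z - x) < r \<longrightarrow> f z - f x - Df x (z - x) \<ge> - K * (norm (z - x))\<^sup>2"
    using C1_with_differentiable_derivative_imp_local_quadratic_bound[OF assms(3) \<open>x \<in> U\<close>]
      deriv deriv2 \<open>x \<in> U\<close> by blast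
  obtain a0 v0 c0 where "a0 \<ge> 0" "\<And>z. - a0 * (norm z)\<^sup>2 + blinfun_apply v0 z + c0 \<le> f z"
    using assms(1) unfolding Phi_lsc_proper_def Phi_lsc_minorants_def Phi_lsc_def by force
  then obtain A where "A \<ge> 0" and far:
      "\<forall>z. norm (z - x) \<ge> r \<longrightarrow> f z - f x - Df x (z - x) \<ge> - A * (norm (z - x))\<^sup>2"
    using quadratic_minorant_imp_quadratic_bound_beyond \<open>r > 0\<close> by blast
  have "f z - f x - Df x (z - x) \<ge> - (K + A) * (norm (z - x))\<^sup>2" for z
  proof -
    have "K * (norm (z - x))\<^sup>2 \<le> (K + A) * (norm (z - x))\<^sup>2"
      "A * (norm (z - x))\<^sup>2 \<le> (K + A) * (norm (z - x))\<^sup>2"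
      using \<open>K \<ge> 0\<close> \<open>A \<ge> 0\<close> by (simp_all add: distrib_right)
    then show ?thesis using near[rule_format, of z] far[rule_format, of z] by linarith
  qed
  with \<open>K \<ge> 0\<close> \<open>A \<ge> 0\<close> show "subdiff_lsc f x \<noteq> {}"
    using quadratic_lower_bound_imp_subdiff_lsc[where a = "K + A" and L = "Df x"] by auto
qed

end
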